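(* Let $G$ be a finite abelian $2$-group of order $2^n$, $n\geq 3$, which is not elementary abelian. Then for every $0\leq k\leq n$, $$s_k(G)\leq s_k(D_8\times C_2^{n-3}).$$
   Context: For a finite $2$-group $G$ of order $2^n$ and $0\le k\le n$, $s_k(G)$ denotes the number of subgroups of $G$ of order $2^k$. $D_8$ is the dihedral group of order $8$ and $C_2^{m}$ is the elementary abelian $2$-group of order $2^m$. *)

theory Defs
  imports "HOL-Algebra.Algebra"
begin

definition num_subgroups_of_order :: "nat \<Rightarrow> ('a, 'b) monoid_scheme \<Rightarrow> nat" where
  "num_subgroups_of_order k G = card {H. subgroup H G \<and> card H = 2 ^ k}"

text \<open>Dihedral group of order 8: (a, b) represents r^a s^(if b then 1 else 0), a < 4,
  with r^4 = s^2 = 1 and s r s = r^-1.\<close>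
definition D8 :: "(nat \<times> bool) monoid" where
  "D8 = \<lparr> carrier = {(a, b). a < 4},
          monoid.mult = (\<lambda>(a1, b1) (a2, b2). ((a1 + (if b1 then 4 - a2 else a2)) mod 4, b1 \<noteq> b2)),
          one = (0, False) \<rparr>"

definition C2pow :: "nat \<Rightarrow> (nat \<Rightarrow> bool) monoid" where
  "C2pow m = \<lparr> carrier = {v. \<forall>i\<ge>m. \<not> v i},
               monoid.mult = (\<lambda>v w i. v i \<noteq> w i),
               one = (\<lambda>_. False) \<rparr>"

end

theory Submission
  imports Defs
begin

(* Let M be a subgroup of index two of a finite group G. A subgroup K of G that is not contained
   in M is H \<union> H x with H = K \<inter> M and x \<notin> M, and H \<union> H x is a subgroup exactly when
   x^2 \<in> H and x normalises H; so K is determined by H together with one of the cosets H x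
   outside M. Counting subgroups inside and outside M recursively shows that the Gaussian
   binomial [n, k] at q = 2 bounds the number of subgroups of order 2^k of an abelian group of
   order 2^n, with equality for C_2^n.
   If the abelian group G is not elementary, choose M to contain every element of order at most
   two. Then x^2 \<noteq> 1 for x \<notin> M, and double counting pairs (x, H) with x^2 \<in> H bounds the
   subgroups outside M by 2^(n-k) times the number of subgroups of order 2^(k-1) of M containing
   a fixed nontrivial element, which is at most [n-2, k-2]. In D_8 \<times> C_2^(n-3) take for M the
   elementary abelian subgroup <r^2, s> \<times> C_2^(n-3): there H \<union> H x is a subgroup for every
   x \<notin> M and every subgroup H of M containing the centre <r^2>, so the same expression is a
   lower bound. *)


section \<open>Gaussian binomial coefficients at q = 2\<close>

(* The Gaussian binomial coefficient [a, b] at q = 2, via the q-Pascal rule; it counts the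
   subgroups of order 2^b of C_2^a. *)
fun gbinom2 :: "nat \<Rightarrow> nat \<Rightarrow> nat" where
  "gbinom2 a 0 = 1"
| "gbinom2 0 (Suc b) = 0"
| "gbinom2 (Suc a) (Suc b) = gbinom2 a (Suc b) + 2 ^ (a - b) * gbinom2 a b"

lemma gbinom2_eq_0: "a < b \<Longrightarrow> gbinom2 a b = 0"
proof (induction a arbitrary: b)
  case 0
  then show ?case by (cases b) auto
next
  case (Suc a)
  then show ?case by (cases b) auto
qed

lemma gbinom2_le_Suc_Suc: "gbinom2 a b \<le> gbinom2 (Suc a) (Suc b)"
proof (cases "b \<le> a")
  case True
  have "gbinom2 a b \<le> 2 ^ (a - b) * gbinom2 a b" by simp
  then show ?thesis by (simp add: trans_le_add2)
next
  case False
  then show ?thesis by (simp add: gbinom2_eq_0)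
qed

lemma gbinom2_le_add_add: "gbinom2 a b \<le> gbinom2 (a + c) (b + c)"
proof (induction c)
  case (Suc c)
  then show ?case using gbinom2_le_Suc_Suc[of "a + c" "b + c"] by simp
qed simp

lemma gbinom2_diff_Suc:
  assumes "p \<le> j" "Suc j \<le> m"
  shows "gbinom2 (m - p) (Suc j - p)
    = gbinom2 (m - 1 - p) (Suc j - p) + 2 ^ (m - Suc j) * gbinom2 (m - 1 - p) (j - p)"
proof -
  have "m - p = Suc (m - 1 - p)" "Suc j - p = Suc (j - p)" "m - 1 - p - (j - p) = m - Suc j"
    using assms by auto
  then show ?thesis by (metis gbinom2.simps(3))
qed

section \<open>Subgroups of finite groups\<close>

lemma (in group) inv_mult_cancel_left:
  "x \<in> carrier G \<Longrightarrow> y \<in> carrier G \<Longrightarrow> inv x \<otimes> (x \<otimes> y) = y"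
  by (simp add: m_assoc[symmetric])

lemma (in group) subgroup_of_subgroup_iff:
  assumes "subgroup M G"
  shows "subgroup K (G\<lparr>carrier := M\<rparr>) \<longleftrightarrow> subgroup K G \<and> K \<subseteq> M"
proof
  assume K: "subgroup K (G\<lparr>carrier := M\<rparr>)"
  show "subgroup K G \<and> K \<subseteq> M" using incl_subgroup[OF assms K] subgroup.subset[OF K] by simp
qed (use subgroup_incl assms in blast)

lemma (in comm_group) comm_group_subgroup:
  assumes "subgroup M G"
  shows "comm_group (G\<lparr>carrier := M\<rparr>)"
proof (rule group.group_comm_groupI)
  show "group (G\<lparr>carrier := M\<rparr>)" using subgroup_imp_group[OF assms] .
qed (use subgroup.subset[OF assms] m_comm in auto)

lemma (in group) card_subgroup_pow2:
  assumes "card (carrier G) = 2 ^ m" "subgroup H G"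
  shows "\<exists>i\<le>m. card H = 2 ^ i"
proof -
  have "card H dvd 2 ^ m"
    using lagrange[OF assms(2)] assms(1) unfolding order_def by (metis dvd_triv_right)
  then show ?thesis using divides_primepow_nat[OF two_is_prime_nat] by blast
qed

lemma (in group) comm_group_of_squares_one:
  assumes "\<forall>x\<in>carrier G. x \<otimes> x = \<one>"
  shows "comm_group G"
proof (rule group_comm_groupI)
  have inv_self: "inv x = x" if "x \<in> carrier G" for x
    using inv_equality[of x x] assms that by simp
  fix x y assume xy: "x \<in> carrier G" "y \<in> carrier G"
  then have "x \<otimes> y = inv (x \<otimes> y)" using inv_self by simp
  also have "\<dots> = y \<otimes> x" using xy inv_self[of x] inv_self[of y] by (simp add: inv_mult_group)
  finally show "x \<otimes> y = y \<otimes> x" .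
qed

lemma (in group) subgroup_one_involution:
  assumes "z \<in> carrier G" "z \<otimes> z = \<one>"
  shows "subgroup {\<one>, z} G"
proof (rule subgroupI)
  have "inv z = z" using inv_equality[OF assms(2)] assms(1) by simp
  then show "a \<in> {\<one>, z} \<Longrightarrow> inv a \<in> {\<one>, z}" for a by auto
qed (use assms in auto)

lemma (in comm_group) subgroup_squares_one: "subgroup {x \<in> carrier G. x \<otimes> x = \<one>} G"
proof (rule subgroupI)
  fix a b assume "a \<in> {x \<in> carrier G. x \<otimes> x = \<one>}" "b \<in> {x \<in> carrier G. x \<otimes> x = \<one>}"
  then show "a \<otimes> b \<in> {x \<in> carrier G. x \<otimes> x = \<one>}" by (simp add: m_ac)
qed (auto simp: inv_mult[symmetric])

lemma (in group) card_rcos_image: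
  assumes "finite (carrier G)" "subgroup H G" "A \<subseteq> carrier G"
    and closed: "\<And>h x. h \<in> H \<Longrightarrow> x \<in> A \<Longrightarrow> h \<otimes> x \<in> A"
  shows "card ((\<lambda>x. H #> x) ` A) * card H = card A"
proof -
  let ?C = "(\<lambda>x. H #> x) ` A"
  have H: "H \<subseteq> carrier G" using subgroup.subset[OF assms(2)] .
  have cosets: "?C \<subseteq> rcosets H" using rcosetsI[OF H] assms(3) by blast
  have union: "\<Union>?C = A"
  proof
    show "\<Union>?C \<subseteq> A" using closed unfolding r_coset_def by blast
    show "A \<subseteq> \<Union>?C" using rcos_self[OF _ assms(2)] assms(3) by blast
  qed
  have "card H * card ?C = card (\<Union>?C)"
  proof (rule card_partition)
    show "finite (\<Union>?C)" using union assms(1,3) finite_subset by simp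
    then show "finite ?C" by (simp add: finite_UnionD)
    show "card c = card H" if "c \<in> ?C" for c
      using card_rcosets_equal[OF _ H] cosets that by auto
    show "c1 \<inter> c2 = {}" if "c1 \<in> ?C" "c2 \<in> ?C" "c1 \<noteq> c2" for c1 c2
      using rcos_disjoint[OF assms(2)] cosets that unfolding pairwise_def disjnt_def by blast
  qed
  then show ?thesis using union by (simp add: mult.commute)
qed

definition subgroups_containing ::
    "('a, 'b) monoid_scheme \<Rightarrow> 'a set \<Rightarrow> nat \<Rightarrow> 'a set set" where
  "subgroups_containing G P c = {K. subgroup K G \<and> P \<subseteq> K \<and> card K = c}"

lemma finite_subgroups_containing:
  "finite (carrier G) \<Longrightarrow> finite (subgroups_containing G P c)"
  unfolding subgroups_containing_def
  by (rule finite_subset[of _ "Pow (carrier G)"]) (auto dest: subgroup.subset)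

lemma subgroups_containing_subset_singleton:
  assumes "finite (carrier G)" "c \<le> card P"
  shows "subgroups_containing G P c \<subseteq> {P}"
proof
  fix K assume "K \<in> subgroups_containing G P c"
  then have K: "subgroup K G" "P \<subseteq> K" "card K \<le> card P"
    using assms(2) by (auto simp: subgroups_containing_def)
  have "finite K" using finite_subset[OF subgroup.subset[OF K(1)] assms(1)] .
  then show "K \<in> {P}" using card_seteq[OF _ K(2,3)] by simp
qed

lemma subgroups_containing_eq_empty:
  assumes "finite (carrier G)" "card (carrier G) < c \<or> c < card P"
  shows "subgroups_containing G P c = {}"
proof -
  have False if K: "subgroup K G" "P \<subseteq> K" "card K = c" for K
  proof -
    have "finite K" using finite_subset[OF subgroup.subset[OF K(1)] assms(1)] .
    then have "card P \<le> c" using card_mono K by blast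
    moreover have "c \<le> card (carrier G)" using card_mono[OF assms(1) subgroup.subset[OF K(1)]] K(3) by simp
    ultimately show False using assms(2) by linarith
  qed
  then show ?thesis unfolding subgroups_containing_def by blast
qed

lemma num_subgroups_of_order_eq:
  "num_subgroups_of_order k G = card (subgroups_containing G {\<one>\<^bsub>G\<^esub>} (2 ^ k))"
  unfolding num_subgroups_of_order_def subgroups_containing_def
  by (metis (no_types, lifting) empty_subsetI insert_subset subgroup.one_closed)

section \<open>Doubling a subgroup by a coset\<close>

definition doubles :: "('a, 'b) monoid_scheme \<Rightarrow> 'a set \<Rightarrow> 'a \<Rightarrow> bool" where
  "doubles G H x \<longleftrightarrow> x \<in> carrier G \<and> x \<otimes>\<^bsub>G\<^esub> x \<in> H
    \<and> (\<forall>h\<in>H. x \<otimes>\<^bsub>G\<^esub> h \<otimes>\<^bsub>G\<^esub> inv\<^bsub>G\<^esub> x \<in> H)"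

lemma (in comm_group) doubles_iff:
  assumes "subgroup H G"
  shows "doubles G H x \<longleftrightarrow> x \<in> carrier G \<and> x \<otimes> x \<in> H"
  using subgroup.subset[OF assms] by (auto simp: doubles_def m_ac)

lemma (in group) doubles_mult:
  assumes H: "subgroup H G" and x: "doubles G H x" and h: "h \<in> H"
  shows "doubles G H (h \<otimes> x)"
proof -
  interpret H: subgroup H G by (fact H)
  have xc: "x \<in> carrier G" and xx: "x \<otimes> x \<in> H"
    and nx: "\<And>b. b \<in> H \<Longrightarrow> x \<otimes> b \<otimes> inv x \<in> H"
    using x by (auto simp: doubles_def)
  have hc: "h \<in> carrier G" using h H.subset by blast
  have "(h \<otimes> x) \<otimes> (h \<otimes> x) = h \<otimes> (x \<otimes> h \<otimes> inv x) \<otimes> (x \<otimes> x)"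
    using xc hc by (simp add: m_assoc inv_mult_cancel_left)
  moreover have "(h \<otimes> x) \<otimes> b \<otimes> inv (h \<otimes> x) = h \<otimes> (x \<otimes> b \<otimes> inv x) \<otimes> inv h"
    if "b \<in> H" for b
    using xc hc that by (simp add: m_assoc inv_mult_group)
  ultimately show ?thesis
    using xc hc h xx nx by (auto simp: doubles_def)
qed

lemma (in group) subgroup_Un_rcos:
  assumes H: "subgroup H G" and x: "doubles G H x"
  shows "subgroup (H \<union> (H #> x)) G"
proof -
  interpret H: subgroup H G by (fact H)
  have xc: "x \<in> carrier G" and xx: "x \<otimes> x \<in> H"
    and nx: "\<And>b. b \<in> H \<Longrightarrow> x \<otimes> b \<otimes> inv x \<in> H"
    using x by (auto simp: doubles_def)
  let ?U = "H \<union> (H #> x)"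
  have mem_iff: "a \<in> ?U \<longleftrightarrow> a \<in> H \<or> (\<exists>h\<in>H. a = h \<otimes> x)" for a
    unfolding r_coset_def by blast
  have mult: "a \<otimes> b \<in> ?U" if "a \<in> ?U" "b \<in> ?U" for a b
    using that unfolding mem_iff
  proof (elim disjE bexE)
    assume "a \<in> H" "b \<in> H"
    then show "a \<otimes> b \<in> H \<or> (\<exists>h\<in>H. a \<otimes> b = h \<otimes> x)" by simp
  next
    fix l assume "a \<in> H" "l \<in> H" "b = l \<otimes> x"
    then have "a \<otimes> b = (a \<otimes> l) \<otimes> x" using xc by (simp add: m_assoc)
    then show "a \<otimes> b \<in> H \<or> (\<exists>h\<in>H. a \<otimes> b = h \<otimes> x)"
      using \<open>a \<in> H\<close> \<open>l \<in> H\<close> by blast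
  next
    fix h assume "h \<in> H" "a = h \<otimes> x" "b \<in> H"
    then have "a \<otimes> b = h \<otimes> (x \<otimes> b \<otimes> inv x) \<otimes> x"
      using xc by (simp add: m_assoc)
    then show "a \<otimes> b \<in> H \<or> (\<exists>h\<in>H. a \<otimes> b = h \<otimes> x)"
      using \<open>h \<in> H\<close> \<open>b \<in> H\<close> nx by blast
  next
    fix h l assume "h \<in> H" "l \<in> H" "a = h \<otimes> x" "b = l \<otimes> x"
    then have "a \<otimes> b = h \<otimes> (x \<otimes> l \<otimes> inv x) \<otimes> (x \<otimes> x)"
      using xc by (simp add: m_assoc inv_mult_cancel_left)
    then show "a \<otimes> b \<in> H \<or> (\<exists>h\<in>H. a \<otimes> b = h \<otimes> x)"
      using \<open>h \<in> H\<close> \<open>l \<in> H\<close> nx xx by simp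
  qed
  have inv: "inv a \<in> ?U" if "a \<in> ?U" for a
    using that unfolding mem_iff
  proof (elim disjE bexE)
    fix h assume h: "h \<in> H" "a = h \<otimes> x"
    have "inv a = inv (x \<otimes> x) \<otimes> (x \<otimes> inv h \<otimes> inv x) \<otimes> x"
      using xc h by (simp add: m_assoc inv_mult_cancel_left inv_mult_group)
    moreover have "inv (x \<otimes> x) \<otimes> (x \<otimes> inv h \<otimes> inv x) \<in> H" using h(1) nx xx by simp
    ultimately show "inv a \<in> H \<or> (\<exists>h\<in>H. inv a = h \<otimes> x)" by blast
  qed simp
  show ?thesis
  proof (rule subgroupI)
    show "?U \<subseteq> carrier G" using r_coset_subset_G[OF H.subset xc] H.subset by blast
    show "?U \<noteq> {}" using H.one_closed by blast
  qed (use mult inv in auto)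
qed

lemma (in group) doubles_if_commutes_up_to:
  assumes H: "subgroup H G" "z \<in> H" and x: "x \<in> carrier G" "x \<otimes> x \<in> {\<one>, z}"
    and comm: "\<forall>h\<in>H. x \<otimes> h \<in> {h \<otimes> x, z \<otimes> h \<otimes> x}"
  shows "doubles G H x"
proof -
  interpret H: subgroup H G by (fact H(1))
  have "x \<otimes> h \<otimes> inv x \<in> H" if h: "h \<in> H" for h
  proof -
    have hz: "h \<in> carrier G" "z \<in> carrier G" using h H(2) H.subset by auto
    have conj: "x \<otimes> h \<otimes> inv x = c" if "c \<in> carrier G" "x \<otimes> h = c \<otimes> x" for c
    proof -
      have "x \<otimes> h \<otimes> inv x = c \<otimes> x \<otimes> inv x" using that(2) by simp
      also have "\<dots> = c" using that(1) x(1) by (simp add: m_assoc)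
      finally show ?thesis .
    qed
    have "x \<otimes> h = h \<otimes> x \<or> x \<otimes> h = (z \<otimes> h) \<otimes> x" using comm h by blast
    then have "x \<otimes> h \<otimes> inv x = h \<or> x \<otimes> h \<otimes> inv x = z \<otimes> h"
      using conj hz by blast
    then show ?thesis using h H by auto
  qed
  moreover have "x \<otimes> x \<in> H" using x(2) H by auto
  ultimately show ?thesis using x by (simp add: doubles_def)
qed

lemma (in group) card_Un_rcos_outside:
  assumes "finite (carrier G)" "subgroup P G" "x \<in> carrier G - P"
  shows "card (P \<union> (P #> x)) = 2 * card P"
proof -
  interpret P: subgroup P G by fact
  have xc: "x \<in> carrier G" using assms(3) by blast
  have "P \<inter> (P #> x) = {}"
  proof (rule ccontr)
    assume "P \<inter> (P #> x) \<noteq> {}"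
    then obtain h where h: "h \<in> P" "h \<otimes> x \<in> P" unfolding r_coset_def by blast
    have "inv h \<otimes> (h \<otimes> x) = x" using h(1) xc by (simp add: inv_mult_cancel_left)
    moreover have "inv h \<otimes> (h \<otimes> x) \<in> P" using h by simp
    ultimately show False using assms(3) by simp
  qed
  moreover have "card (P #> x) = card P"
    using card_rcosets_equal[OF rcosetsI[OF P.subset xc] P.subset] by simp
  moreover have "finite (P #> x)" "finite P"
    using assms(1) finite_subset r_coset_subset_G[OF P.subset xc] P.subset by blast+
  ultimately show ?thesis by (simp add: card_Un_disjoint)
qed

lemma (in group) ex_square_mem_outside:
  assumes "card (carrier G) = 2 ^ m" "subgroup P G" "y \<in> carrier G - P"
  shows "\<exists>x\<in>carrier G - P. x \<otimes> x \<in> P"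
proof -
  let ?Q = "\<lambda>i. y [^] ((2::nat) ^ i) \<in> P"
  have "?Q m"
    using pow_order_eq_1[of y] assms subgroup.one_closed[OF assms(2)] unfolding order_def by simp
  moreover have "\<not> ?Q 0" using assms(3) by simp
  ultimately have "\<exists>i. \<not> ?Q i \<and> ?Q (Suc i)"
    by (induction m) auto
  then obtain i where i: "\<not> ?Q i" "?Q (Suc i)" by blast
  have "y [^] ((2::nat) ^ i) \<otimes> y [^] ((2::nat) ^ i) = y [^] ((2::nat) ^ Suc i)"
    using assms(3) by (simp add: nat_pow_mult mult_2)
  then show ?thesis using i assms(3) by (metis Diff_iff nat_pow_closed)
qed

lemma (in comm_group) ex_index_two_subgroup:
  assumes "card (carrier G) = 2 ^ m" "subgroup P G" "P \<noteq> carrier G"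
  shows "\<exists>M. subgroup M G \<and> P \<subseteq> M \<and> 2 * card M = card (carrier G)"
  using assms(2,3)
proof (induction "card (carrier G) - card P" arbitrary: P rule: less_induct)
  case less
  have fin: "finite (carrier G)" using assms(1) card_ge_0_finite by force
  obtain y where "y \<in> carrier G - P" using less.prems subgroup.subset by blast
  then obtain x where x: "x \<in> carrier G - P" "x \<otimes> x \<in> P"
    using ex_square_mem_outside[OF assms(1) less.prems(1)] by blast
  let ?P' = "P \<union> (P #> x)"
  have sub: "subgroup ?P' G"
    using subgroup_Un_rcos[OF less.prems(1)] doubles_iff[OF less.prems(1)] x by blast
  have card: "card ?P' = 2 * card P"
    using card_Un_rcos_outside[OF fin less.prems(1) x(1)] .
  show ?case
  proof (cases "?P' = carrier G")
    case True
    then show ?thesis using card less.prems(1) by (intro exI[of _ P]) simp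
  next
    case False
    have "card ?P' \<le> card (carrier G)" using card_mono[OF fin subgroup.subset[OF sub]] .
    moreover have "card P > 0" using subgroup.finite_imp_card_positive[OF less.prems(1) fin] .
    ultimately have "card (carrier G) - card ?P' < card (carrier G) - card P" using card by linarith
    then show ?thesis using less.hyps[OF _ sub False] by blast
  qed
qed

section \<open>Subgroups of a subgroup of index two\<close>

definition extensions_outside ::
    "('a, 'b) monoid_scheme \<Rightarrow> 'a set \<Rightarrow> 'a set \<Rightarrow> 'a set set" where
  "extensions_outside G M H = {K. subgroup K G \<and> K \<inter> M = H \<and> \<not> K \<subseteq> M}"

locale index_two = group G for G (structure) +
  fixes M :: "'a set"
  assumes finite_carrier: "finite (carrier G)"
    and subgroup_M: "subgroup M G"
    and two_card_M: "2 * card M = card (carrier G)"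
begin

lemma M_subset: "M \<subseteq> carrier G"
  using subgroup.subset[OF subgroup_M] .

lemma card_outside: "card (carrier G - M) = card M"
  using card_Diff_subset[OF finite_subset[OF M_subset finite_carrier] M_subset] two_card_M by simp

lemma card_M_pow2:
  assumes "card (carrier G) = 2 ^ m"
  shows "card M = 2 ^ (m - 1)" and "0 < m"
proof -
  show "0 < m" using two_card_M assms by (cases m) auto
  then show "card M = 2 ^ (m - 1)" using two_card_M assms by (cases m) auto
qed

lemma mult_outside:
  assumes "h \<in> M" "x \<in> carrier G - M"
  shows "h \<otimes> x \<in> carrier G - M" and "x \<otimes> h \<in> carrier G - M"
proof -
  have h: "h \<in> carrier G" "inv h \<in> M" using assms(1) M_subset subgroup.m_inv_closed[OF subgroup_M] by auto
  have x: "x \<in> carrier G" "x \<notin> M" using assms(2) by auto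
  have "x = inv h \<otimes> (h \<otimes> x)" "x = (x \<otimes> h) \<otimes> inv h"
    using h x by (simp_all add: inv_mult_cancel_left m_assoc)
  then show "h \<otimes> x \<in> carrier G - M" "x \<otimes> h \<in> carrier G - M"
    using h x subgroup.m_closed[OF subgroup_M] by (metis Diff_iff m_closed)+
qed

lemma rcos_outside: "H \<subseteq> M \<Longrightarrow> x \<in> carrier G - M \<Longrightarrow> H #> x \<subseteq> carrier G - M"
  using mult_outside(1) unfolding r_coset_def by blast

lemma outside_eq_rcos: "x \<in> carrier G - M \<Longrightarrow> carrier G - M = M #> x"
proof (rule sym, rule card_subset_eq)
  assume x: "x \<in> carrier G - M"
  show "finite (carrier G - M)" using finite_carrier by simp
  show "M #> x \<subseteq> carrier G - M" using rcos_outside[OF order.refl x] .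
  have "card (M #> x) = card M"
    using card_rcosets_equal[OF rcosetsI[OF M_subset] M_subset] x by (metis DiffD1)
  then show "card (M #> x) = card (carrier G - M)" using card_outside by simp
qed

lemma mult_inv_mem:
  assumes x: "x \<in> carrier G - M" and y: "y \<in> carrier G - M"
  shows "y \<otimes> inv x \<in> M"
proof -
  have "y \<in> M #> x" using outside_eq_rcos[OF x] y by blast
  then show ?thesis using subgroup.rcos_module_imp[OF subgroup_M is_group] x by blast
qed

lemma square_mem:
  assumes x: "x \<in> carrier G"
  shows "x \<otimes> x \<in> M"
proof (cases "x \<in> M")
  case True
  then show ?thesis using subgroup.m_closed[OF subgroup_M] by blast
next
  case False
  have "inv x \<notin> M" using subgroup.m_inv_closed[OF subgroup_M, of "inv x"] x False by auto
  then show ?thesis using mult_inv_mem[of "inv x" x] x False by simp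
qed

lemma conj_mem:
  assumes x: "x \<in> carrier G" and h: "h \<in> M"
  shows "x \<otimes> h \<otimes> inv x \<in> M"
proof (cases "x \<in> M")
  case True
  then show ?thesis
    using h subgroup.m_closed[OF subgroup_M] subgroup.m_inv_closed[OF subgroup_M] by blast
next
  case False
  then show ?thesis using mult_inv_mem[of x "x \<otimes> h"] mult_outside(2)[OF h] x by blast
qed

lemma Diff_eq_rcos_Int:
  assumes K: "subgroup K G" and x: "x \<in> K - M"
  shows "K - M = (K \<inter> M) #> x"
proof
  interpret K: subgroup K G by (fact K)
  have xc: "x \<in> carrier G - M" using x by auto
  show "K - M \<subseteq> (K \<inter> M) #> x"
  proof
    fix y assume y: "y \<in> K - M"
    have "y \<otimes> inv x \<in> K" using x y by auto
    moreover have "y \<otimes> inv x \<in> M" using mult_inv_mem[OF xc] y by auto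
    ultimately show "y \<in> (K \<inter> M) #> x"
      using subgroup.rcos_module_rev[OF subgroups_Inter_pair[OF K subgroup_M] is_group] xc y by auto
  qed
  show "(K \<inter> M) #> x \<subseteq> K - M"
  proof
    fix y assume "y \<in> (K \<inter> M) #> x"
    then obtain h where h: "h \<in> K \<inter> M" "y = h \<otimes> x" unfolding r_coset_def by blast
    then show "y \<in> K - M" using x mult_outside(1)[OF _ xc] by auto
  qed
qed

lemma card_eq_twice_card_Int:
  assumes K: "subgroup K G" and "\<not> K \<subseteq> M"
  shows "card K = 2 * card (K \<inter> M)"
proof -
  obtain x where x: "x \<in> K - M" using assms(2) by blast
  have KM: "K \<inter> M \<subseteq> carrier G" using M_subset by blast
  have xc: "x \<in> carrier G" using x subgroup.subset[OF K] by blast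
  have fin: "finite K" using finite_subset[OF subgroup.subset[OF K] finite_carrier] .
  have "card (K - M) = card (K \<inter> M)"
    using Diff_eq_rcos_Int[OF K x] card_rcosets_equal[OF rcosetsI[OF KM xc] KM] by simp
  moreover have "card K = card (K \<inter> M) + card (K - M)"
    using card_Int_Diff[OF fin] .
  ultimately show ?thesis by simp
qed

lemma Diff_extension_outside:
  assumes K: "K \<in> extensions_outside G M H"
  obtains x where "x \<in> carrier G - M" "doubles G H x" "K - M = H #> x"
proof -
  have K: "subgroup K G" "K \<inter> M = H" "\<not> K \<subseteq> M"
    using K unfolding extensions_outside_def by auto
  interpret K: subgroup K G by (fact K(1))
  obtain x where x: "x \<in> K - M" using K(3) by blast
  have xc: "x \<in> carrier G" using x K.subset by blast
  have "x \<otimes> x \<in> K" using x by simp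
  then have "x \<otimes> x \<in> H" using square_mem[OF xc] K(2) by blast
  moreover have "x \<otimes> h \<otimes> inv x \<in> H" if "h \<in> H" for h
  proof -
    have "x \<otimes> h \<otimes> inv x \<in> K" using x that K(2) by auto
    then show ?thesis using conj_mem[OF xc] that K(2) by blast
  qed
  ultimately have "doubles G H x" using xc by (simp add: doubles_def)
  moreover have "K - M = H #> x" using Diff_eq_rcos_Int[OF K(1) x] K(2) by simp
  ultimately show ?thesis using that x xc by blast
qed

lemma Un_rcos_extension_outside:
  assumes H: "subgroup H G" "H \<subseteq> M" and x: "x \<in> carrier G - M" "doubles G H x"
  shows "H \<union> (H #> x) \<in> extensions_outside G M H"
proof -
  have "x \<in> H #> x" using rcos_self[OF _ H(1)] x(1) by blast
  then have "\<not> H \<union> (H #> x) \<subseteq> M" using x(1) by blast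
  moreover have "(H \<union> (H #> x)) \<inter> M = H" using rcos_outside[OF H(2) x(1)] H(2) by blast
  ultimately show ?thesis
    unfolding extensions_outside_def using subgroup_Un_rcos[OF H(1) x(2)] by blast
qed

lemma card_extensions_outside:
  assumes H: "subgroup H G" "H \<subseteq> M"
  shows "card (extensions_outside G M H) * card H = card {x \<in> carrier G - M. doubles G H x}"
proof -
  let ?A = "{x \<in> carrier G - M. doubles G H x}"
  let ?C = "(\<lambda>x. H #> x) ` ?A"
  have "bij_betw (\<lambda>K. K - M) (extensions_outside G M H) ?C"
  proof (rule bij_betw_byWitness[where f' = "\<lambda>C. H \<union> C"])
    show "\<forall>K\<in>extensions_outside G M H. H \<union> (K - M) = K"
      unfolding extensions_outside_def by blast
    show "\<forall>C\<in>?C. H \<union> C - M = C"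
      using rcos_outside[OF H(2)] H(2) by blast
    show "(\<lambda>K. K - M) ` extensions_outside G M H \<subseteq> ?C"
      by (auto elim!: Diff_extension_outside)
    show "(\<lambda>C. H \<union> C) ` ?C \<subseteq> extensions_outside G M H"
      using Un_rcos_extension_outside[OF H] by blast
  qed
  then have "card (extensions_outside G M H) = card ?C"
    by (rule bij_betw_same_card)
  moreover have "card ?C * card H = card ?A"
  proof (rule card_rcos_image[OF finite_carrier H(1)])
    show "?A \<subseteq> carrier G" by blast
    show "h \<otimes> x \<in> ?A" if "h \<in> H" "x \<in> ?A" for h x
      using that doubles_mult[OF H(1)] mult_outside(1) H(2) by blast
  qed
  ultimately show ?thesis by simp
qed

lemma card_subgroups_containing_double:
  assumes "P \<subseteq> M"
  shows "card (subgroups_containing G P (2 * c))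
    = card (subgroups_containing (G\<lparr>carrier := M\<rparr>) P (2 * c))
      + (\<Sum>H\<in>subgroups_containing (G\<lparr>carrier := M\<rparr>) P c. card (extensions_outside G M H))"
proof -
  let ?S = "subgroups_containing G P (2 * c)"
  let ?T = "subgroups_containing (G\<lparr>carrier := M\<rparr>) P c"
  have sub_iff: "subgroup K (G\<lparr>carrier := M\<rparr>) \<longleftrightarrow> subgroup K G \<and> K \<subseteq> M" for K
    using subgroup_of_subgroup_iff[OF subgroup_M] .
  have fin_ext: "finite (extensions_outside G M H)" for H
    by (rule finite_subset[of _ "Pow (carrier G)"])
      (auto simp: extensions_outside_def finite_carrier dest: subgroup.subset)
  have inside: "{K \<in> ?S. K \<subseteq> M} = subgroups_containing (G\<lparr>carrier := M\<rparr>) P (2 * c)"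
    using sub_iff by (auto simp: subgroups_containing_def)
  have outside: "{K \<in> ?S. \<not> K \<subseteq> M} = (\<Union>H\<in>?T. extensions_outside G M H)"
  proof (intro equalityI subsetI)
    fix K assume "K \<in> {K \<in> ?S. \<not> K \<subseteq> M}"
    then have K: "subgroup K G" "P \<subseteq> K" "card K = 2 * c" "\<not> K \<subseteq> M"
      by (auto simp: subgroups_containing_def)
    have "K \<inter> M \<in> ?T"
      using card_eq_twice_card_Int[OF K(1,4)] K(2,3) assms sub_iff subgroups_Inter_pair[OF K(1) subgroup_M]
      by (auto simp: subgroups_containing_def)
    then show "K \<in> (\<Union>H\<in>?T. extensions_outside G M H)"
      using K by (auto simp: extensions_outside_def)
  next
    fix K assume "K \<in> (\<Union>H\<in>?T. extensions_outside G M H)"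
    then obtain H where H: "H \<in> ?T" and K: "subgroup K G" "K \<inter> M = H" "\<not> K \<subseteq> M"
      by (auto simp: extensions_outside_def)
    then show "K \<in> {K \<in> ?S. \<not> K \<subseteq> M}"
      using card_eq_twice_card_Int[OF K(1,3)] by (auto simp: subgroups_containing_def)
  qed
  have fin: "finite ?S" using finite_subgroups_containing[OF finite_carrier] .
  have "card ?S = card ({K \<in> ?S. K \<subseteq> M} \<union> {K \<in> ?S. \<not> K \<subseteq> M})"
    by (rule arg_cong[where f = card]) blast
  also have "\<dots> = card {K \<in> ?S. K \<subseteq> M} + card {K \<in> ?S. \<not> K \<subseteq> M}"
    by (rule card_Un_disjoint) (use fin in auto)
  also have "card {K \<in> ?S. \<not> K \<subseteq> M} = (\<Sum>H\<in>?T. card (extensions_outside G M H))"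
    unfolding outside
  proof (rule card_UN_disjoint)
    show "finite ?T"
      using finite_subgroups_containing[of "G\<lparr>carrier := M\<rparr>"] finite_subset[OF M_subset finite_carrier]
      by simp
  qed (use fin_ext in \<open>auto simp: extensions_outside_def\<close>)
  finally show ?thesis using inside by simp
qed

lemma card_subgroups_containing_Suc_le:
  assumes "card (carrier G) = 2 ^ m" "P \<subseteq> M" "Suc j \<le> m"
  shows "card (subgroups_containing G P (2 ^ Suc j))
    \<le> card (subgroups_containing (G\<lparr>carrier := M\<rparr>) P (2 ^ Suc j))
      + 2 ^ (m - Suc j) * card (subgroups_containing (G\<lparr>carrier := M\<rparr>) P (2 ^ j))"
proof -
  let ?T = "subgroups_containing (G\<lparr>carrier := M\<rparr>) P (2 ^ j)"
  have "card (extensions_outside G M H) \<le> 2 ^ (m - Suc j)" if "H \<in> ?T" for H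
  proof -
    have H: "subgroup H G" "H \<subseteq> M" "card H = 2 ^ j"
      using that subgroup_of_subgroup_iff[OF subgroup_M] by (auto simp: subgroups_containing_def)
    have "card {x \<in> carrier G - M. doubles G H x} \<le> card (carrier G - M)"
      by (rule card_mono) (use finite_carrier in auto)
    then have "card (extensions_outside G M H) * 2 ^ j \<le> 2 ^ (m - Suc j) * 2 ^ j"
      using card_extensions_outside[OF H(1,2)] H(3) card_outside card_M_pow2[OF assms(1)] assms(3)
      by (simp add: power_add[symmetric])
    then show ?thesis by simp
  qed
  then have "(\<Sum>H\<in>?T. card (extensions_outside G M H)) \<le> (\<Sum>H\<in>?T. 2 ^ (m - Suc j))"
    by (rule sum_mono)
  then have "(\<Sum>H\<in>?T. card (extensions_outside G M H)) \<le> 2 ^ (m - Suc j) * card ?T"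
    by (simp add: mult.commute)
  then show ?thesis
    using card_subgroups_containing_double[OF assms(2), of "2 ^ j"] by simp
qed

lemma card_subgroups_containing_Suc_ge:
  assumes "card (carrier G) = 2 ^ m" "P \<subseteq> Q" "Q \<subseteq> M" "Suc j \<le> m"
    and doubles: "\<And>H x. H \<in> subgroups_containing (G\<lparr>carrier := M\<rparr>) Q (2 ^ j) \<Longrightarrow>
      x \<in> carrier G - M \<Longrightarrow> doubles G H x"
  shows "card (subgroups_containing (G\<lparr>carrier := M\<rparr>) P (2 ^ Suc j))
      + 2 ^ (m - Suc j) * card (subgroups_containing (G\<lparr>carrier := M\<rparr>) Q (2 ^ j))
    \<le> card (subgroups_containing G P (2 ^ Suc j))"
proof -
  let ?T = "subgroups_containing (G\<lparr>carrier := M\<rparr>) P (2 ^ j)"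
  let ?TQ = "subgroups_containing (G\<lparr>carrier := M\<rparr>) Q (2 ^ j)"
  have fin: "finite ?T"
    using finite_subgroups_containing[of "G\<lparr>carrier := M\<rparr>"] finite_subset[OF M_subset finite_carrier]
    by simp
  have "card (extensions_outside G M H) = 2 ^ (m - Suc j)" if "H \<in> ?TQ" for H
  proof -
    have H: "subgroup H G" "H \<subseteq> M" "card H = 2 ^ j"
      using that subgroup_of_subgroup_iff[OF subgroup_M] by (auto simp: subgroups_containing_def)
    have "{x \<in> carrier G - M. doubles G H x} = carrier G - M" using doubles[OF that] by blast
    then have "card (extensions_outside G M H) * 2 ^ j = 2 ^ (m - Suc j) * 2 ^ j"
      using card_extensions_outside[OF H(1,2)] H(3) card_outside card_M_pow2[OF assms(1)] assms(4)
      by (simp add: power_add[symmetric])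
    then show ?thesis by simp
  qed
  then have "2 ^ (m - Suc j) * card ?TQ = (\<Sum>H\<in>?TQ. card (extensions_outside G M H))"
    by simp
  also have "\<dots> \<le> (\<Sum>H\<in>?T. card (extensions_outside G M H))"
    by (rule sum_mono2[OF fin]) (use assms(2) in \<open>auto simp: subgroups_containing_def\<close>)
  finally show ?thesis
    using card_subgroups_containing_double[OF order.trans[OF assms(2,3)], of "2 ^ j"] by simp
qed

end

section \<open>Counting subgroups of abelian 2-groups\<close>

lemma card_subgroups_containing_le_gbinom2:
  fixes G (structure)
  assumes "comm_group G" "card (carrier G) = 2 ^ m" "subgroup P G" "card P = 2 ^ p"
  shows "card (subgroups_containing G P (2 ^ j)) \<le> gbinom2 (m - p) (j - p)"
  using assms
proof (induction m arbitrary: G P j rule: less_induct)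
  case (less m)
  interpret comm_group G by fact
  have fin: "finite (carrier G)" using less.prems(2) card_ge_0_finite by force
  consider "j \<le> p" | "m < j" | "p < j" "j \<le> m" by linarith
  then show ?case
  proof cases
    case 1
    have "subgroups_containing G P (2 ^ j) \<subseteq> {P}"
      by (rule subgroups_containing_subset_singleton[OF fin]) (use 1 less.prems(4) in simp)
    then show ?thesis using 1 card_mono[of "{P}"] by simp
  next
    case 2
    then show ?thesis using subgroups_containing_eq_empty[OF fin] less.prems(2) by simp
  next
    case 3
    then obtain j' where j': "j = Suc j'" "p \<le> j'" by (cases j) auto
    have "P \<noteq> carrier G" using less.prems(2,4) 3 by auto
    then obtain M where M: "subgroup M G" "P \<subseteq> M" "2 * card M = card (carrier G)"
      using ex_index_two_subgroup[OF less.prems(2,3)] by blast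
    interpret index_two G M
      by (intro index_two.intro is_group index_two_axioms.intro) (use fin M in auto)
    let ?GM = "G\<lparr>carrier := M\<rparr>"
    have GM: "comm_group ?GM" "card (carrier ?GM) = 2 ^ (m - 1)" "subgroup P ?GM"
      using comm_group_subgroup[OF M(1)] card_M_pow2[OF less.prems(2)]
        subgroup_of_subgroup_iff[OF M(1)] less.prems(3) M(2) by auto
    have IH: "card (subgroups_containing ?GM P (2 ^ i)) \<le> gbinom2 (m - 1 - p) (i - p)" for i
      using less.IH[OF _ GM less.prems(4)] card_M_pow2(2)[OF less.prems(2)] by simp
    have "card (subgroups_containing G P (2 ^ j))
        \<le> card (subgroups_containing ?GM P (2 ^ j)) + 2 ^ (m - j) * card (subgroups_containing ?GM P (2 ^ j'))"
      using card_subgroups_containing_Suc_le[OF less.prems(2) M(2)] 3 j' by simp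
    also have "\<dots> \<le> gbinom2 (m - 1 - p) (j - p) + 2 ^ (m - j) * gbinom2 (m - 1 - p) (j' - p)"
      using IH[of j] IH[of j'] by (intro add_mono mult_le_mono2)
    also have "\<dots> = gbinom2 (m - p) (j - p)" using gbinom2_diff_Suc[of p j' m] 3 j' by simp
    finally show ?thesis .
  qed
qed

lemma gbinom2_le_card_subgroups_containing:
  fixes G (structure)
  assumes "group G" "card (carrier G) = 2 ^ m" "subgroup P G" "card P = 2 ^ p"
    and "\<forall>x\<in>carrier G. x \<otimes> x = \<one>" "p \<le> j"
  shows "gbinom2 (m - p) (j - p) \<le> card (subgroups_containing G P (2 ^ j))"
  using assms
proof (induction m arbitrary: G P j rule: less_induct)
  case (less m)
  interpret comm_group G using group.comm_group_of_squares_one less.prems(1,5) by blast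
  have fin: "finite (carrier G)" using less.prems(2) card_ge_0_finite by force
  have "p \<le> m"
    using card_mono[OF fin subgroup.subset[OF less.prems(3)]] less.prems(2,4) by simp
  then consider "j = p" | "m < j" | "p < j" "j \<le> m" using less.prems(6) by linarith
  then show ?case
  proof cases
    case 1
    then have "P \<in> subgroups_containing G P (2 ^ j)"
      using less.prems(3,4) by (simp add: subgroups_containing_def)
    then have "0 < card (subgroups_containing G P (2 ^ j))"
      using finite_subgroups_containing[OF fin] card_gt_0_iff by blast
    then show ?thesis using 1 by simp
  next
    case 2
    then show ?thesis using gbinom2_eq_0 \<open>p \<le> m\<close> by simp
  next
    case 3
    then obtain j' where j': "j = Suc j'" "p \<le> j'" by (cases j) auto
    have "P \<noteq> carrier G" using less.prems(2,4) 3 by auto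
    then obtain M where M: "subgroup M G" "P \<subseteq> M" "2 * card M = card (carrier G)"
      using ex_index_two_subgroup[OF less.prems(2,3)] by blast
    interpret index_two G M
      by (intro index_two.intro is_group index_two_axioms.intro) (use fin M in auto)
    let ?GM = "G\<lparr>carrier := M\<rparr>"
    have GM: "group ?GM" "card (carrier ?GM) = 2 ^ (m - 1)" "subgroup P ?GM"
      "\<forall>x\<in>carrier ?GM. x \<otimes>\<^bsub>?GM\<^esub> x = \<one>\<^bsub>?GM\<^esub>"
      using subgroup_imp_group[OF M(1)] card_M_pow2[OF less.prems(2)] less.prems(5) M_subset
        subgroup_of_subgroup_iff[OF M(1)] less.prems(3) M(2) by auto
    have IH: "p \<le> i \<Longrightarrow> gbinom2 (m - 1 - p) (i - p) \<le> card (subgroups_containing ?GM P (2 ^ i))"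
      for i
      using less.IH[OF _ GM(1-3) less.prems(4) GM(4)] card_M_pow2(2)[OF less.prems(2)] by simp
    have doubles: "doubles G H x" if "H \<in> subgroups_containing ?GM P (2 ^ j')" "x \<in> carrier G - M" for H x
      using that less.prems(5) doubles_iff subgroup_of_subgroup_iff[OF M(1)] subgroup.one_closed
      by (auto simp: subgroups_containing_def)
    have "gbinom2 (m - p) (j - p) = gbinom2 (m - 1 - p) (j - p) + 2 ^ (m - j) * gbinom2 (m - 1 - p) (j' - p)"
      using gbinom2_diff_Suc[of p j' m] 3 j' by simp
    also have "\<dots> \<le> card (subgroups_containing ?GM P (2 ^ j))
        + 2 ^ (m - j) * card (subgroups_containing ?GM P (2 ^ j'))"
      using IH[of j] IH[of j'] 3 j' by (intro add_mono mult_le_mono2) auto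
    also have "\<dots> \<le> card (subgroups_containing G P (2 ^ j))"
      using card_subgroups_containing_Suc_ge[OF less.prems(2) order.refl M(2) _ doubles] 3 j' by simp
    finally show ?thesis .
  qed
qed

lemma card_subgroups_containing_nontrivial_le:
  fixes G (structure)
  assumes "comm_group G" "card (carrier G) = 2 ^ m" "y \<in> carrier G" "y \<noteq> \<one>"
  shows "card (subgroups_containing G {y} (2 ^ j)) \<le> (if j = 0 then 0 else gbinom2 (m - 1) (j - 1))"
proof -
  interpret comm_group G by fact
  have fin: "finite (carrier G)" using assms(2) card_ge_0_finite by force
  let ?P = "generate G {y}"
  have P: "subgroup ?P G" using generate_is_subgroup assms(3) by simp
  have y: "y \<in> ?P" by (simp add: generate.incl)
  have same: "subgroups_containing G {y} c = subgroups_containing G ?P c" for c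
    using generate_subgroup_incl[of "{y}"] y by (auto simp: subgroups_containing_def)
  obtain p where p: "p \<le> m" "card ?P = 2 ^ p" using card_subgroup_pow2[OF assms(2) P] by blast
  have "card {\<one>, y} \<le> card ?P"
    using card_mono[OF finite_subset[OF subgroup.subset[OF P] fin]] y subgroup.one_closed[OF P] by simp
  then have "2 \<le> card ?P" using assms(4) by simp
  then have "p \<noteq> 0" using p(2) by (intro notI) simp
  show ?thesis
  proof (cases "p \<le> j")
    case True
    have "card (subgroups_containing G {y} (2 ^ j)) \<le> gbinom2 (m - p) (j - p)"
      using card_subgroups_containing_le_gbinom2[OF assms(1,2) P p(2)] same by simp
    also have "\<dots> \<le> gbinom2 (m - p + (p - 1)) (j - p + (p - 1))" by (rule gbinom2_le_add_add)
    finally show ?thesis using True p(1) \<open>p \<noteq> 0\<close> by simp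
  next
    case False
    then show ?thesis using same subgroups_containing_eq_empty[OF fin] p(2) by simp
  qed
qed

lemma sum_card_filter_swap:
  assumes "finite A" "finite B"
  shows "(\<Sum>a\<in>A. card {b \<in> B. R a b}) = (\<Sum>b\<in>B. card {a \<in> A. R a b})"
proof -
  have "card {b \<in> B. R a b} = (\<Sum>b\<in>B. if R a b then 1 else 0)" for a
    using sum.inter_filter[OF assms(2), of "\<lambda>_. 1 :: nat"] by simp
  moreover have "card {a \<in> A. R a b} = (\<Sum>a\<in>A. if R a b then 1 else 0)" for b
    using sum.inter_filter[OF assms(1), of "\<lambda>_. 1 :: nat"] by simp
  ultimately show ?thesis using sum.swap[of "\<lambda>a b. if R a b then 1 else 0 :: nat" B A] by simp
qed

lemma (in index_two) sum_card_extensions_outside_le: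
  assumes "comm_group G" "card (carrier G) = 2 ^ n"
    and "{x \<in> carrier G. x \<otimes> x = \<one>} \<subseteq> M" "Suc j \<le> n"
  shows "(\<Sum>H\<in>subgroups_containing (G\<lparr>carrier := M\<rparr>) {\<one>} (2 ^ j).
      card (extensions_outside G M H))
    \<le> 2 ^ (n - Suc j) * (if j = 0 then 0 else gbinom2 (n - 2) (j - 1))"
proof -
  let ?GM = "G\<lparr>carrier := M\<rparr>"
  let ?T = "subgroups_containing ?GM {\<one>} (2 ^ j)"
  let ?b = "if j = 0 then 0 else gbinom2 (n - 2) (j - 1)"
  interpret comm_group G by fact
  have finT: "finite ?T"
    using finite_subgroups_containing[of ?GM] finite_subset[OF M_subset finite_carrier] by simp
  have H: "subgroup H G" "H \<subseteq> M" "card H = 2 ^ j" if "H \<in> ?T" for H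
    using that subgroup_of_subgroup_iff[OF subgroup_M] by (auto simp: subgroups_containing_def)
  have GM: "comm_group ?GM" "card (carrier ?GM) = 2 ^ (n - 1)"
    using comm_group_subgroup[OF subgroup_M] card_M_pow2[OF assms(2)] by auto
  have bound: "card {H \<in> ?T. x \<otimes> x \<in> H} \<le> ?b" if x: "x \<in> carrier G - M" for x
  proof -
    have "{H \<in> ?T. x \<otimes> x \<in> H} = subgroups_containing ?GM {x \<otimes> x} (2 ^ j)"
      by (auto simp: subgroups_containing_def dest: subgroup.one_closed)
    moreover have "x \<otimes> x \<in> carrier ?GM" "x \<otimes> x \<noteq> \<one>\<^bsub>?GM\<^esub>"
      using square_mem x assms(3) by auto
    ultimately show ?thesis
      using card_subgroups_containing_nontrivial_le[OF GM, of "x \<otimes> x" j] by (metis diff_diff_left one_add_one)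
  qed
  have "card (extensions_outside G M H) * 2 ^ j = card {x \<in> carrier G - M. x \<otimes> x \<in> H}"
    if "H \<in> ?T" for H
  proof -
    have "{x \<in> carrier G - M. doubles G H x} = {x \<in> carrier G - M. x \<otimes> x \<in> H}"
      using doubles_iff[OF H(1)[OF that]] by auto
    then show ?thesis using card_extensions_outside[OF H(1,2)[OF that]] H(3)[OF that] by simp
  qed
  then have "(\<Sum>H\<in>?T. card (extensions_outside G M H)) * 2 ^ j
      = (\<Sum>H\<in>?T. card {x \<in> carrier G - M. x \<otimes> x \<in> H})"
    by (simp add: sum_distrib_right)
  also have "\<dots> = (\<Sum>x\<in>carrier G - M. card {H \<in> ?T. x \<otimes> x \<in> H})"
    using sum_card_filter_swap[OF finT, of "carrier G - M"] finite_carrier by simp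
  also have "\<dots> \<le> card (carrier G - M) * ?b"
    using sum_mono[OF bound, of "carrier G - M"] by simp
  also have "\<dots> = 2 ^ (n - Suc j) * ?b * 2 ^ j"
    using card_outside card_M_pow2[OF assms(2)] assms(4) by (simp add: power_add[symmetric])
  finally show ?thesis by (metis mult_le_cancel2 zero_less_numeral zero_less_power)
qed

(* For n \<ge> 3 this is s_k(D_8 \<times> C_2^(n-3)): the subgroups of order 2^k inside an elementary abelian
   subgroup of index two, plus 2^(n-k) extensions of each subgroup of order 2^(k-1) that contains
   the centre. *)
definition d8_count :: "nat \<Rightarrow> nat \<Rightarrow> nat" where
  "d8_count n k = gbinom2 (n - 1) k + 2 ^ (n - k) * (if k < 2 then 0 else gbinom2 (n - 2) (k - 2))"

lemma card_subgroups_le_d8_count: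
  fixes G (structure)
  assumes "comm_group G" "card (carrier G) = 2 ^ n" "\<exists>x\<in>carrier G. x \<otimes> x \<noteq> \<one>" "k \<le> n"
  shows "card (subgroups_containing G {\<one>} (2 ^ k)) \<le> d8_count n k"
proof -
  interpret comm_group G by fact
  have fin: "finite (carrier G)" using assms(2) card_ge_0_finite by force
  obtain M where M: "subgroup M G" "{x \<in> carrier G. x \<otimes> x = \<one>} \<subseteq> M"
    "2 * card M = card (carrier G)"
    using ex_index_two_subgroup[OF assms(2) subgroup_squares_one] assms(3) by blast
  interpret index_two G M
    by (intro index_two.intro is_group index_two_axioms.intro) (use fin M in auto)
  let ?GM = "G\<lparr>carrier := M\<rparr>"
  show ?thesis
  proof (cases k)
    case 0
    have "subgroups_containing G {\<one>} (2 ^ k) \<subseteq> {{\<one>}}"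
      using subgroups_containing_subset_singleton[OF fin] 0 by simp
    then show ?thesis using 0 card_mono[of "{{\<one>}}"] by (simp add: d8_count_def)
  next
    case (Suc j)
    have one: "{\<one>} \<subseteq> M" using subgroup.one_closed[OF M(1)] by simp
    have GM: "comm_group ?GM" "card (carrier ?GM) = 2 ^ (n - 1)" "subgroup {\<one>} ?GM"
      using comm_group_subgroup[OF M(1)] card_M_pow2[OF assms(2)]
        group.triv_subgroup[OF subgroup_imp_group[OF M(1)]] by auto
    have "card (subgroups_containing G {\<one>} (2 ^ k))
        = card (subgroups_containing ?GM {\<one>} (2 ^ k))
          + (\<Sum>H\<in>subgroups_containing ?GM {\<one>} (2 ^ j). card (extensions_outside G M H))"
      using card_subgroups_containing_double[OF one, of "2 ^ j"] Suc by simp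
    also have "\<dots> \<le> gbinom2 (n - 1) k + 2 ^ (n - k) * (if j = 0 then 0 else gbinom2 (n - 2) (j - 1))"
      using card_subgroups_containing_le_gbinom2[OF GM(1,2,3), of 0 k]
        sum_card_extensions_outside_le[OF assms(1,2) M(2)] Suc assms(4)
      by (intro add_mono) simp_all
    also have "\<dots> = d8_count n k" using Suc by (simp add: d8_count_def)
    finally show ?thesis .
  qed
qed

lemma d8_count_le_card_subgroups:
  fixes G (structure)
  assumes "group G" "card (carrier G) = 2 ^ n" "subgroup B G" "2 * card B = card (carrier G)"
    and "\<forall>b\<in>B. b \<otimes> b = \<one>" "z \<in> B" "z \<noteq> \<one>"
    and "\<forall>x\<in>carrier G - B. x \<otimes> x \<in> {\<one>, z}
      \<and> (\<forall>b\<in>B. x \<otimes> b \<in> {b \<otimes> x, z \<otimes> b \<otimes> x})"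
    and "k \<le> n"
  shows "d8_count n k \<le> card (subgroups_containing G {\<one>} (2 ^ k))"
proof -
  interpret group G by fact
  have fin: "finite (carrier G)" using assms(2) card_ge_0_finite by force
  interpret index_two G B
    by (intro index_two.intro is_group index_two_axioms.intro) (use fin assms(3,4) in auto)
  let ?GB = "G\<lparr>carrier := B\<rparr>"
  have GB: "group ?GB" "card (carrier ?GB) = 2 ^ (n - 1)"
    "\<forall>x\<in>carrier ?GB. x \<otimes>\<^bsub>?GB\<^esub> x = \<one>\<^bsub>?GB\<^esub>"
    using subgroup_imp_group[OF assms(3)] card_M_pow2[OF assms(2)] assms(5) by auto
  have one: "subgroup {\<one>} ?GB" "card {\<one>} = 2 ^ 0"
    using group.triv_subgroup[OF GB(1)] by auto
  show ?thesis
  proof (cases k)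
    case 0
    have "{\<one>} \<in> subgroups_containing G {\<one>} (2 ^ k)"
      using triv_subgroup 0 by (simp add: subgroups_containing_def)
    then have "0 < card (subgroups_containing G {\<one>} (2 ^ k))"
      using finite_subgroups_containing[OF fin] card_gt_0_iff by blast
    then show ?thesis using 0 by (simp add: d8_count_def)
  next
    case (Suc j)
    let ?Z = "{\<one>, z}"
    have zc: "z \<in> carrier G" "z \<otimes> z = \<one>" using assms(5,6) M_subset by auto
    have Z: "subgroup ?Z ?GB" "card ?Z = 2 ^ 1"
      using subgroup_one_involution[OF zc] subgroup_of_subgroup_iff[OF assms(3)]
        subgroup.one_closed[OF assms(3)] assms(6,7) by auto
    have doubles: "doubles G H x"
      if H: "H \<in> subgroups_containing ?GB ?Z (2 ^ j)" and x: "x \<in> carrier G - B" for H x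
    proof (rule doubles_if_commutes_up_to)
      have H: "subgroup H G" "H \<subseteq> B" "?Z \<subseteq> H"
        using H subgroup_of_subgroup_iff[OF assms(3)] by (auto simp: subgroups_containing_def)
      then show "subgroup H G" "z \<in> H" by auto
      show "x \<in> carrier G" "x \<otimes> x \<in> {\<one>, z}" using assms(8) x by auto
      show "\<forall>h\<in>H. x \<otimes> h \<in> {h \<otimes> x, z \<otimes> h \<otimes> x}" using assms(8) x H(2) by blast
    qed
    have "gbinom2 (n - 1) k \<le> card (subgroups_containing ?GB {\<one>} (2 ^ k))"
      using gbinom2_le_card_subgroups_containing[OF GB(1,2) one GB(3)] by simp
    moreover have "(if k < 2 then 0 else gbinom2 (n - 2) (k - 2))
        \<le> card (subgroups_containing ?GB ?Z (2 ^ j))"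
      using gbinom2_le_card_subgroups_containing[OF GB(1,2) Z GB(3), of j] Suc
      by (auto simp: numeral_2_eq_2)
    moreover have "card (subgroups_containing ?GB {\<one>} (2 ^ k))
        + 2 ^ (n - k) * card (subgroups_containing ?GB ?Z (2 ^ j))
        \<le> card (subgroups_containing G {\<one>} (2 ^ k))"
      using card_subgroups_containing_Suc_ge[OF assms(2) _ _ _ doubles] assms(6,9) Suc
        subgroup.one_closed[OF assms(3)] by simp
    ultimately show ?thesis
      unfolding d8_count_def by (meson add_mono mult_le_mono2 order.trans)
  qed
qed

section \<open>The group D_8 \<times> C_2^m\<close>

lemma D8_mult: "(a1, b1) \<otimes>\<^bsub>D8\<^esub> (a2, b2) = ((a1 + (if b1 then 4 - a2 else a2)) mod 4, b1 \<noteq> b2)"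
  by (simp add: D8_def)

lemma D8_one: "\<one>\<^bsub>D8\<^esub> = (0, False)"
  by (simp add: D8_def)

lemma D8_carrier: "carrier D8 = {..<4} \<times> UNIV"
  by (auto simp: D8_def)

lemma less_4_cases: "(a::nat) < 4 \<Longrightarrow> a = 0 \<or> a = 1 \<or> a = 2 \<or> a = 3"
  by auto

lemma group_D8: "group D8"
proof (rule groupI)
  fix x y z assume "x \<in> carrier D8" "y \<in> carrier D8" "z \<in> carrier D8"
  then show "x \<otimes>\<^bsub>D8\<^esub> y \<otimes>\<^bsub>D8\<^esub> z = x \<otimes>\<^bsub>D8\<^esub> (y \<otimes>\<^bsub>D8\<^esub> z)"
    by (cases x, cases y, cases z) (auto simp: D8_mult D8_carrier dest!: less_4_cases)
next
  fix x assume "x \<in> carrier D8"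
  then obtain a b where x: "x = (a, b)" "a < 4" by (auto simp: D8_carrier)
  show "\<exists>y\<in>carrier D8. y \<otimes>\<^bsub>D8\<^esub> x = \<one>\<^bsub>D8\<^esub>"
  proof (cases b)
    case True
    then show ?thesis using x by (intro bexI[of _ "(a, True)"]) (auto simp: D8_mult D8_one D8_carrier)
  next
    case False
    then show ?thesis using x less_4_cases[OF x(2)]
      by (intro bexI[of _ "((4 - a) mod 4, False)"]) (auto simp: D8_mult D8_one D8_carrier)
  qed
qed (auto simp: D8_mult D8_one D8_carrier)

lemma C2pow_mult: "v \<otimes>\<^bsub>C2pow m\<^esub> w = (\<lambda>i. v i \<noteq> w i)"
  by (simp add: C2pow_def)

lemma C2pow_one: "\<one>\<^bsub>C2pow m\<^esub> = (\<lambda>_. False)"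
  by (simp add: C2pow_def)

lemma C2pow_carrier: "carrier (C2pow m) = {v. \<forall>i\<ge>m. \<not> v i}"
  by (simp add: C2pow_def)

lemma group_C2pow: "group (C2pow m)"
proof (rule groupI)
  fix x assume "x \<in> carrier (C2pow m)"
  then show "\<exists>y\<in>carrier (C2pow m). y \<otimes>\<^bsub>C2pow m\<^esub> x = \<one>\<^bsub>C2pow m\<^esub>"
    by (intro bexI[of _ x]) (auto simp: C2pow_mult C2pow_one)
qed (auto simp: C2pow_mult C2pow_one C2pow_carrier)

lemma card_C2pow: "card (carrier (C2pow m)) = 2 ^ m"
proof -
  have "bij_betw (\<lambda>v. {i. v i}) (carrier (C2pow m)) (Pow {..<m})"
    by (rule bij_betwI[where g = "\<lambda>S i. i \<in> S"]) (auto simp: C2pow_carrier not_le[symmetric])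
  then show ?thesis by (simp add: bij_betw_same_card card_Pow)
qed

lemma d8_count_le_num_subgroups_D8:
  assumes "k \<le> m + 3"
  shows "d8_count (m + 3) k \<le> num_subgroups_of_order k (D8 \<times>\<times> C2pow m)"
proof -
  let ?D = "D8 \<times>\<times> C2pow m"
  let ?B = "({0, 2::nat} \<times> (UNIV :: bool set)) \<times> carrier (C2pow m)"
  let ?z = "((2, False), \<lambda>_. False) :: (nat \<times> bool) \<times> (nat \<Rightarrow> bool)"
  interpret D: group ?D using DirProd_group[OF group_D8 group_C2pow] .
  have carrier: "carrier ?D = ({..<4} \<times> UNIV) \<times> carrier (C2pow m)"
    by (simp add: D8_carrier)
  have card_D: "card (carrier ?D) = 2 ^ (m + 3)"
    unfolding carrier by (simp add: card_cartesian_product card_C2pow power_add)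
  have card_B: "2 * card ?B = card (carrier ?D)"
    unfolding card_D by (simp add: card_cartesian_product card_C2pow power_add)
  have square_B: "x \<otimes>\<^bsub>?D\<^esub> x = \<one>\<^bsub>?D\<^esub>" if "x \<in> ?B" for x
    using that by (auto simp: D8_mult D8_one C2pow_mult C2pow_one fun_eq_iff)
  have subgroup_B: "subgroup ?B ?D"
  proof (rule D.subgroupI)
    show sub: "?B \<subseteq> carrier ?D" unfolding carrier by auto
    show "inv\<^bsub>?D\<^esub> x \<in> ?B" if "x \<in> ?B" for x
    proof -
      have "inv\<^bsub>?D\<^esub> x = x" using D.inv_equality[OF square_B[OF that]] that sub by blast
      then show ?thesis using that by simp
    qed
    show "x \<otimes>\<^bsub>?D\<^esub> y \<in> ?B" if "x \<in> ?B" "y \<in> ?B" for x y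
      using that by (auto simp: D8_mult C2pow_mult C2pow_carrier)
  qed (auto simp: C2pow_carrier)
  have "d8_count (m + 3) k \<le> card (subgroups_containing ?D {\<one>\<^bsub>?D\<^esub>} (2 ^ k))"
  proof (rule d8_count_le_card_subgroups[OF D.is_group card_D subgroup_B card_B _ _ _ _ assms])
    show "\<forall>b\<in>?B. b \<otimes>\<^bsub>?D\<^esub> b = \<one>\<^bsub>?D\<^esub>" using square_B by blast
    show "?z \<in> ?B" by (simp add: C2pow_carrier)
    show "?z \<noteq> \<one>\<^bsub>?D\<^esub>" by (simp add: D8_one C2pow_one)
    show "\<forall>x\<in>carrier ?D - ?B. x \<otimes>\<^bsub>?D\<^esub> x \<in> {\<one>\<^bsub>?D\<^esub>, ?z} \<and>
        (\<forall>y\<in>?B. x \<otimes>\<^bsub>?D\<^esub> y \<in> {y \<otimes>\<^bsub>?D\<^esub> x, ?z \<otimes>\<^bsub>?D\<^esub> y \<otimes>\<^bsub>?D\<^esub> x})"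
      unfolding carrier
      by (auto simp: D8_mult D8_one C2pow_mult C2pow_one fun_eq_iff split: if_splits
          dest!: less_4_cases)
  qed
  then show ?thesis by (simp add: num_subgroups_of_order_eq)
qed

theorem lemma2p3:
  fixes G :: "('a, 'b) monoid_scheme" and n k :: nat
  assumes "comm_group G"
    and "finite (carrier G)"
    and "card (carrier G) = 2 ^ n"
    and "n \<ge> 3"
    and "\<not> (\<forall>x\<in>carrier G. x [^]\<^bsub>G\<^esub> (2::nat) = \<one>\<^bsub>G\<^esub>)"
    and "k \<le> n"
  shows "num_subgroups_of_order k G \<le> num_subgroups_of_order k (D8 \<times>\<times> C2pow (n - 3))"
proof -
  interpret comm_group G by fact
  have "\<exists>x\<in>carrier G. x \<otimes>\<^bsub>G\<^esub> x \<noteq> \<one>\<^bsub>G\<^esub>"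
    using assms(5) by (auto simp: numeral_2_eq_2)
  then have "num_subgroups_of_order k G \<le> d8_count n k"
    using card_subgroups_le_d8_count[OF assms(1,3) _ assms(6)] by (simp add: num_subgroups_of_order_eq)
  also have "\<dots> \<le> num_subgroups_of_order k (D8 \<times>\<times> C2pow (n - 3))"
    using d8_count_le_num_subgroups_D8[of k "n - 3"] assms(4,6) by simp
  finally show ?thesis .
qed

end
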